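(* Let $L$ be a $\mathbb{Z}$-lattice, $A,s$ positive integers and $w\in R(A,L)$. Define $\mathfrak{S}_{w,s}(L)=\{(\alpha,\beta)\in(\mathbb{Z}/s\mathbb{Z})^2: L\prec_{A,(\alpha,\beta),s}w\}$, for every $K\in\mathrm{gen}(L)$ with $K\not\cong L$ define $\mathfrak{S}_{L,s}(K)=\{(\alpha,\beta)\in(\mathbb{Z}/s\mathbb{Z})^2: K\prec_{A,(\alpha,\beta),s}L\}$, and let $\mathfrak{S}_s=\mathfrak{S}_{w,s}(L)\cap\bigcap_{K}\mathfrak{S}_{L,s}(K)$, the intersection over all $K\in\mathrm{gen}(L)$ not isometric to $L$. Let $(\alpha,\beta)\in\mathfrak{S}_s$ and let $\ell=\mathbb{Z}v_1+\mathbb{Z}v_2=[A,b,a]$ with $(a,b)\equiv(\alpha,\beta)\pmod s$ and $Aa-b^2>0$. If $\ell$ is represented by some lattice in $\mathrm{gen}(L)$, then there exists a representation $\sigma:\ell\to L$ with $\sigma(v_1)=w$.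
   Context: All $\mathbb{Z}$-lattices are free $\mathbb{Z}$-modules of finite rank with a positive definite, integral symmetric bilinear form $B$; $Q(v)=B(v,v)$. A representation is a $B$-preserving linear map; $\cong$ means isometric. $[A,b,a]$ is the binary lattice $\mathbb{Z}v_1+\mathbb{Z}v_2$ with $Q(v_1)=A$, $B(v_1,v_2)=b$, $Q(v_2)=a$. $\mathrm{gen}(L)$ is the set of lattices on $V=\mathbb{Q}L$ locally isometric to $L$ at every prime. $R(A,K)=\{v\in K:Q(v)=A\}$. For lattices $K,L$ on $V$, $v\in R(A,K)$: $R_v(K,\alpha,\beta,s)=\{u\in K/sK:Q(u)\equiv\alpha,\ B(u,v)\equiv\beta\pmod s\}$; $R_v(K,L,s)=\{\tau\in O(V):\tau(sK)\subseteq L,\ \tau(v)\in L\}$; $K\prec_{A,(\alpha,\beta),s}L$ means: for every $v\in R(A,K)$ and every coset $u\in R_v(K,\alpha,\beta,s)$ there is $\tau\in R_v(K,L,s)$ with $\tau(\tilde u)\in L$ for all $\tilde u\in u$. For $v,w\in R(A,L)$: $R_{v,w}(L,s)=\{\tau\in R_v(L,L,s):\tau(v)=w\}$; $L\prec_{A,(\alpha,\beta),s}w$ means: for every $v\in R(A,L)$ and every coset $u\in R_v(L,\alpha,\beta,s)$ there is $\tau\in R_{v,w}(L,s)$ with $\tau(\tilde u)\in L$ for all $\tilde u\in u$. *)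

theory Defs
  imports "HOL-Analysis.Analysis" "HOL-Number_Theory.Cong"
begin

definition Bf :: "rat^'n^'n \<Rightarrow> rat^'n \<Rightarrow> rat^'n \<Rightarrow> rat" where
  "Bf G x y = (\<Sum>i\<in>UNIV. \<Sum>j\<in>UNIV. x$i * G$i$j * y$j)"

definition Qf :: "rat^'n^'n \<Rightarrow> rat^'n \<Rightarrow> rat" where
  "Qf G x = Bf G x x"

definition symmetric_form :: "rat^'n^'n \<Rightarrow> bool" where
  "symmetric_form G \<longleftrightarrow> (\<forall>i j. G$i$j = G$j$i)"

text \<open>b is a Z-basis of L, and a Q-basis of V (so L is a full lattice on V).\<close>
definition lattice_basis :: "(rat^'n) set \<Rightarrow> ('n \<Rightarrow> rat^'n) \<Rightarrow> bool" where
  "lattice_basis L b \<longleftrightarrow>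
     (\<forall>c::'n \<Rightarrow> rat. (\<Sum>i\<in>UNIV. c i *s b i) = 0 \<longrightarrow> (\<forall>i. c i = 0)) \<and>
     L = {(\<Sum>i\<in>UNIV. of_int (c i) *s b i) | c :: 'n \<Rightarrow> int. True}"

definition lattice_on :: "rat^'n^'n \<Rightarrow> (rat^'n) set \<Rightarrow> bool" where
  "lattice_on G L \<longleftrightarrow> (\<exists>b. lattice_basis L b) \<and>
     (\<forall>x\<in>L. \<forall>y\<in>L. Bf G x y \<in> \<int>) \<and>
     (\<forall>x\<in>L. x \<noteq> 0 \<longrightarrow> Qf G x > 0)"

definition orth :: "rat^'n^'n \<Rightarrow> (rat^'n \<Rightarrow> rat^'n) set" where
  "orth G = {\<tau>. (\<forall>x y. \<tau> (x + y) = \<tau> x + \<tau> y) \<and> (\<forall>c x. \<tau> (c *s x) = c *s \<tau> x)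
               \<and> bij \<tau> \<and> (\<forall>x y. Bf G (\<tau> x) (\<tau> y) = Bf G x y)}"

definition lattice_isometric :: "rat^'n^'n \<Rightarrow> (rat^'n) set \<Rightarrow> (rat^'n) set \<Rightarrow> bool" where
  "lattice_isometric G K L \<longleftrightarrow> (\<exists>f. bij_betw f K L \<and>
     (\<forall>x\<in>K. \<forall>y\<in>K. f (x + y) = f x + f y) \<and>
     (\<forall>x\<in>K. \<forall>y\<in>K. Bf G (f x) (f y) = Bf G x y))"

text \<open>Local isometry at p: there is U in GL_n(Z_p) with U^T G_K U = G_L, where G_K, G_L
  are Gram matrices of bases of K and L.  Equivalently some sigma in O(V_p) maps L_p onto K_p
  (sigma sends the L-basis to the K-basis transformed by U).  Z_p is realised as the inverse
  limit of Z/p^k Z: U is given by a compatible sequence of integer matrices M k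
  (M (k+1) = M k mod p^k), the unit condition is that p does not divide det (M 1), and the
  equation holds modulo p^k for every k.\<close>
definition locally_isometric_at :: "rat^'n^'n \<Rightarrow> int \<Rightarrow> (rat^'n) set \<Rightarrow> (rat^'n) set \<Rightarrow> bool" where
  "locally_isometric_at G p K L \<longleftrightarrow>
     (\<exists>bK bL. lattice_basis K bK \<and> lattice_basis L bL \<and>
       (\<exists>M :: nat \<Rightarrow> 'n \<Rightarrow> 'n \<Rightarrow> int.
          (\<forall>k i j. [M (Suc k) i j = M k i j] (mod p ^ k)) \<and>
          \<not> p dvd det (\<chi> i j. M 1 i j) \<and>
          (\<forall>k i j. \<exists>c::int.
              (\<Sum>a\<in>UNIV. \<Sum>b\<in>UNIV. of_int (M k a i) * Bf G (bK a) (bK b) * of_int (M k b j))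
                - Bf G (bL i) (bL j) = of_int (p ^ k * c))))"

definition genus :: "rat^'n^'n \<Rightarrow> (rat^'n) set \<Rightarrow> (rat^'n) set set" where
  "genus G L = {K. lattice_on G K \<and> (\<forall>p. prime p \<longrightarrow> locally_isometric_at G p K L)}"

definition rcong :: "int \<Rightarrow> rat \<Rightarrow> int \<Rightarrow> bool" where
  "rcong s x a \<longleftrightarrow> (\<exists>k::int. x = of_int (a + s * k))"

text \<open>K \<prec>_{A,(\<alpha>,\<beta>),s} L. Cosets u in K/sK are handled through representatives u \<in> K;
  the defining conditions depend only on the coset.\<close>
definition prec_lat :: "rat^'n^'n \<Rightarrow> int \<Rightarrow> int \<Rightarrow> int \<Rightarrow> int \<Rightarrow> (rat^'n) set \<Rightarrow> (rat^'n) set \<Rightarrow> bool" where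
  "prec_lat G A \<alpha> \<beta> s K L \<longleftrightarrow>
     (\<forall>v\<in>K. Qf G v = of_int A \<longrightarrow>
       (\<forall>u\<in>K. rcong s (Qf G u) \<alpha> \<and> rcong s (Bf G u v) \<beta> \<longrightarrow>
          (\<exists>\<tau>\<in>orth G. (\<forall>x\<in>K. \<tau> (of_int s *s x) \<in> L) \<and> \<tau> v \<in> L \<and>
              (\<forall>x\<in>K. \<tau> (u + of_int s *s x) \<in> L))))"

definition prec_vec :: "rat^'n^'n \<Rightarrow> int \<Rightarrow> int \<Rightarrow> int \<Rightarrow> int \<Rightarrow> (rat^'n) set \<Rightarrow> rat^'n \<Rightarrow> bool" where
  "prec_vec G A \<alpha> \<beta> s L w \<longleftrightarrow>
     (\<forall>v\<in>L. Qf G v = of_int A \<longrightarrow>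
       (\<forall>u\<in>L. rcong s (Qf G u) \<alpha> \<and> rcong s (Bf G u v) \<beta> \<longrightarrow>
          (\<exists>\<tau>\<in>orth G. (\<forall>x\<in>L. \<tau> (of_int s *s x) \<in> L) \<and> \<tau> v \<in> L \<and> \<tau> v = w \<and>
              (\<forall>x\<in>L. \<tau> (u + of_int s *s x) \<in> L))))"

definition frakS :: "rat^'n^'n \<Rightarrow> int \<Rightarrow> int \<Rightarrow> (rat^'n) set \<Rightarrow> rat^'n \<Rightarrow> (int \<times> int) set" where
  "frakS G A s L w = {(\<alpha>, \<beta>). 0 \<le> \<alpha> \<and> \<alpha> < s \<and> 0 \<le> \<beta> \<and> \<beta> < s \<and>
      prec_vec G A \<alpha> \<beta> s L w \<and>
      (\<forall>K\<in>genus G L. \<not> lattice_isometric G K L \<longrightarrow> prec_lat G A \<alpha> \<beta> s K L)}"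

text \<open>The binary lattice [A,b,a] = Z v1 + Z v2, modelled on int \<times> int with v1 = (1,0),
  v2 = (0,1).\<close>
fun binB :: "int \<Rightarrow> int \<Rightarrow> int \<Rightarrow> int \<times> int \<Rightarrow> int \<times> int \<Rightarrow> int" where
  "binB A b a (x1, x2) (y1, y2) = A * x1 * y1 + b * (x1 * y2 + x2 * y1) + a * x2 * y2"

definition represents_binary :: "rat^'n^'n \<Rightarrow> int \<Rightarrow> int \<Rightarrow> int \<Rightarrow> (rat^'n) set \<Rightarrow> (int \<times> int \<Rightarrow> rat^'n) \<Rightarrow> bool" where
  "represents_binary G A b a K \<sigma> \<longleftrightarrow>
     (\<forall>x y. \<sigma> (x + y) = \<sigma> x + \<sigma> y) \<and> (\<forall>x. \<sigma> x \<in> K) \<and>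
     (\<forall>x y. Bf G (\<sigma> x) (\<sigma> y) = of_int (binB A b a x y))"

end

theory Submission
  imports Defs
begin

text \<open>Take a representation \<open>\<sigma>\<close> of \<open>[A,b,a]\<close> into some \<open>K\<close> in the genus.  If \<open>K \<cong> L\<close>,
  compose with the isometry.  Otherwise apply \<open>K \<prec> L\<close> to \<open>v = \<sigma> v\<^sub>1\<close> and the coset of
  \<open>u = \<sigma> v\<^sub>2\<close>, whose norm and inner product with \<open>v\<close> are \<open>a \<equiv> \<alpha>\<close> and \<open>b \<equiv> \<beta>\<close> mod \<open>s\<close>: this
  gives \<open>\<tau> \<in> O(V)\<close> with \<open>\<tau> v, \<tau> u \<in> L\<close>, so \<open>\<tau> \<circ> \<sigma>\<close> represents \<open>[A,b,a]\<close> by \<open>L\<close>.  Applying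
  \<open>L \<prec> w\<close> to this representation in the same way moves the image of \<open>v\<^sub>1\<close> to \<open>w\<close>.\<close>

lemma lattice_on_mem_iff:
  fixes L :: "(rat^'n) set"
  assumes "lattice_on G L"
  obtains e :: "'n \<Rightarrow> rat^'n"
  where "\<And>x. x \<in> L \<longleftrightarrow> (\<exists>c::'n \<Rightarrow> int. x = (\<Sum>i\<in>UNIV. of_int (c i) *s e i))"
proof -
  obtain e where "lattice_basis L e" using assms unfolding lattice_on_def by (elim conjE exE)
  then have "L = {(\<Sum>i\<in>UNIV. of_int (c i) *s e i) | c :: 'n \<Rightarrow> int. True}"
    unfolding lattice_basis_def by (rule conjunct2)
  then show ?thesis by (intro that) simp
qed

lemma lattice_on_zero:
  fixes L :: "(rat^'n) set"
  assumes "lattice_on G L" shows "0 \<in> L"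
proof -
  obtain e where L: "\<And>x. x \<in> L \<longleftrightarrow> (\<exists>c::'n \<Rightarrow> int. x = (\<Sum>i\<in>UNIV. of_int (c i) *s e i))"
    using lattice_on_mem_iff[OF assms] by blast
  show ?thesis unfolding L by (rule exI[of _ "\<lambda>_. 0"]) simp
qed

lemma lattice_on_int_comb:
  fixes L :: "(rat^'n) set"
  assumes "lattice_on G L" "x \<in> L" "y \<in> L"
  shows "of_int m *s x + of_int n *s y \<in> L"
proof -
  obtain e where L: "\<And>x. x \<in> L \<longleftrightarrow> (\<exists>c::'n \<Rightarrow> int. x = (\<Sum>i\<in>UNIV. of_int (c i) *s e i))"
    using lattice_on_mem_iff[OF assms(1)] by blast
  obtain c d where x: "x = (\<Sum>i\<in>UNIV. of_int (c i) *s e i)"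
    and y: "y = (\<Sum>i\<in>UNIV. of_int (d i) *s e i)"
    using assms(2,3) unfolding L by blast
  have "of_int m *s x + of_int n *s y = (\<Sum>i\<in>UNIV. of_int (m * c i + n * d i) *s e i)"
    unfolding x y
    by (simp add: vec.scale_sum_right vector_smult_assoc vector_sadd_rdistrib sum.distrib)
  then show ?thesis unfolding L by (rule exI[of _ "\<lambda>i. m * c i + n * d i"])
qed

lemma additive_int_fun_eq_scale:
  fixes g :: "int \<Rightarrow> 'a::comm_ring_1 ^ 'n"
  assumes add: "\<And>x y. g (x + y) = g x + g y"
  shows "g k = of_int k *s g 1"
proof -
  have g0: "g 0 = 0" using add[of 0 0] by simp
  show ?thesis
  proof (induction k rule: int_induct[where k = 0])
    case base show ?case using g0 by simp
  next
    case (step1 i) then show ?case by (simp add: add vector_sadd_rdistrib)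
  next
    case (step2 i)
    have "g (i - 1) = g i - g 1" using add[of "i - 1" 1] by (simp add: eq_diff_eq)
    then show ?case using step2 by (simp add: vector_sub_rdistrib)
  qed
qed

lemma additive_pair_fun_eq:
  fixes \<sigma> :: "int \<times> int \<Rightarrow> 'a::comm_ring_1 ^ 'n"
  assumes add: "\<And>x y. \<sigma> (x + y) = \<sigma> x + \<sigma> y"
  shows "\<sigma> (x1, x2) = of_int x1 *s \<sigma> (1, 0) + of_int x2 *s \<sigma> (0, 1)"
proof -
  have add1: "\<sigma> (x + y, 0) = \<sigma> (x, 0) + \<sigma> (y, 0)"
    and add2: "\<sigma> (0, x + y) = \<sigma> (0, x) + \<sigma> (0, y)" for x y :: int
    using add[of "(x, 0)" "(y, 0)"] add[of "(0, x)" "(0, y)"] by simp_all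
  have "\<sigma> (x1, x2) = \<sigma> (x1, 0) + \<sigma> (0, x2)"
    using add[of "(x1, 0)" "(0, x2)"] by simp
  also have "\<dots> = of_int x1 *s \<sigma> (1, 0) + of_int x2 *s \<sigma> (0, 1)"
    by (simp only: additive_int_fun_eq_scale[of "\<lambda>k. \<sigma> (k, 0)" x1, OF add1]
        additive_int_fun_eq_scale[of "\<lambda>k. \<sigma> (0, k)" x2, OF add2])
  finally show ?thesis .
qed

lemma represents_binary_orth_comp:
  assumes "lattice_on G L" "\<tau> \<in> orth G" "represents_binary G A b a K \<sigma>"
    and "\<tau> (\<sigma> (1, 0)) \<in> L" "\<tau> (\<sigma> (0, 1)) \<in> L"
  shows "represents_binary G A b a L (\<tau> \<circ> \<sigma>)"
proof -
  have \<tau>_add: "\<tau> (x + y) = \<tau> x + \<tau> y" and \<tau>_scale: "\<tau> (c *s x) = c *s \<tau> x"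
    and \<tau>_B: "Bf G (\<tau> x) (\<tau> y) = Bf G x y" for x y c
    using assms(2) unfolding orth_def by blast+
  have \<sigma>_add: "\<sigma> (x + y) = \<sigma> x + \<sigma> y" for x y
    using assms(3) unfolding represents_binary_def by blast
  have "\<tau> (\<sigma> (x1, x2)) \<in> L" for x1 x2
    unfolding additive_pair_fun_eq[OF \<sigma>_add, of x1 x2] \<tau>_add \<tau>_scale
    by (rule lattice_on_int_comb[OF assms(1,4,5)])
  then have "\<tau> (\<sigma> x) \<in> L" for x
    by (cases x) simp
  then show ?thesis
    using assms(3) unfolding represents_binary_def by (simp add: \<tau>_add \<tau>_B)
qed

lemma represents_binary_isometric:
  assumes "lattice_isometric G K L" "represents_binary G A b a K \<sigma>"
  shows "\<exists>\<rho>. represents_binary G A b a L \<rho>"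
proof -
  obtain f where f: "bij_betw f K L" "\<forall>x\<in>K. \<forall>y\<in>K. f (x + y) = f x + f y"
    "\<forall>x\<in>K. \<forall>y\<in>K. Bf G (f x) (f y) = Bf G x y"
    using assms(1) unfolding lattice_isometric_def by blast
  have \<sigma>: "\<sigma> (x + y) = \<sigma> x + \<sigma> y" "\<sigma> x \<in> K" "Bf G (\<sigma> x) (\<sigma> y) = of_int (binB A b a x y)"
    for x y using assms(2) unfolding represents_binary_def by blast+
  have "represents_binary G A b a L (f \<circ> \<sigma>)"
    unfolding represents_binary_def comp_def
    using f(2,3) \<sigma> bij_betwE[OF f(1)] by simp
  then show ?thesis by blast
qed

lemma rcong_of_int_cong: "[a = \<alpha>] (mod s) \<Longrightarrow> rcong s (of_int a) \<alpha>"
  unfolding rcong_def by (metis cong_iff_lin cong_sym)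

lemma represents_binary_basis_values:
  assumes "represents_binary G A b a K \<sigma>" "[a = \<alpha>] (mod s)" "[b = \<beta>] (mod s)"
  shows "\<sigma> (1, 0) \<in> K" "\<sigma> (0, 1) \<in> K" "Qf G (\<sigma> (1, 0)) = of_int A"
    and "rcong s (Qf G (\<sigma> (0, 1))) \<alpha>" "rcong s (Bf G (\<sigma> (0, 1)) (\<sigma> (1, 0))) \<beta>"
  using assms(1) rcong_of_int_cong[OF assms(2)] rcong_of_int_cong[OF assms(3)]
  unfolding represents_binary_def Qf_def by simp_all

lemma represents_binary_prec_lat:
  assumes "prec_lat G A \<alpha> \<beta> s K L" "lattice_on G K" "lattice_on G L"
    and "represents_binary G A b a K \<sigma>" "[a = \<alpha>] (mod s)" "[b = \<beta>] (mod s)"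
  shows "\<exists>\<rho>. represents_binary G A b a L \<rho>"
proof -
  note \<sigma> = represents_binary_basis_values[OF assms(4-6)]
  obtain \<tau> where \<tau>: "\<tau> \<in> orth G" "\<tau> (\<sigma> (1, 0)) \<in> L"
    "\<forall>x\<in>K. \<tau> (\<sigma> (0, 1) + of_int s *s x) \<in> L"
    using assms(1) \<sigma> unfolding prec_lat_def by meson
  have "\<tau> (\<sigma> (0, 1) + of_int s *s 0) \<in> L" using \<tau>(3) lattice_on_zero[OF assms(2)] by blast
  then have "\<tau> (\<sigma> (0, 1)) \<in> L" by simp
  then show ?thesis using represents_binary_orth_comp[OF assms(3) \<tau>(1) assms(4) \<tau>(2)] by blast
qed

lemma represents_binary_prec_vec:
  assumes "prec_vec G A \<alpha> \<beta> s L w" "lattice_on G L"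
    and "represents_binary G A b a L \<sigma>" "[a = \<alpha>] (mod s)" "[b = \<beta>] (mod s)"
  shows "\<exists>\<rho>. represents_binary G A b a L \<rho> \<and> \<rho> (1, 0) = w"
proof -
  note \<sigma> = represents_binary_basis_values[OF assms(3-5)]
  obtain \<tau> where \<tau>: "\<tau> \<in> orth G" "\<tau> (\<sigma> (1, 0)) \<in> L" "\<tau> (\<sigma> (1, 0)) = w"
    "\<forall>x\<in>L. \<tau> (\<sigma> (0, 1) + of_int s *s x) \<in> L"
    using assms(1) \<sigma> unfolding prec_vec_def by meson
  have "\<tau> (\<sigma> (0, 1) + of_int s *s 0) \<in> L" using \<tau>(4) lattice_on_zero[OF assms(2)] by blast
  then have "\<tau> (\<sigma> (0, 1)) \<in> L" by simp
  then have "represents_binary G A b a L (\<tau> \<circ> \<sigma>)"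
    using represents_binary_orth_comp[OF assms(2) \<tau>(1) assms(3) \<tau>(2)] by blast
  then show ?thesis using \<tau>(3) by auto
qed

text \<open>The hypotheses \<open>symmetric_form G\<close>, \<open>A > 0\<close>, \<open>s > 0\<close> and \<open>A a - b\<^sup>2 > 0\<close> only make
  the setting meaningful; the argument does not use them.\<close>

theorem corollary2p4:
  fixes G :: "rat^'n^'n" and L :: "(rat^'n) set" and w :: "rat^'n"
    and A s \<alpha> \<beta> a b :: int
  assumes "symmetric_form G"
    and "lattice_on G L"
    and "A > 0" and "s > 0"
    and "w \<in> L" and "Qf G w = of_int A"
    and "(\<alpha>, \<beta>) \<in> frakS G A s L w"
    and "[a = \<alpha>] (mod s)" and "[b = \<beta>] (mod s)"
    and "A * a - b ^ 2 > 0"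
    and "\<exists>K\<in>genus G L. \<exists>\<sigma>. represents_binary G A b a K \<sigma>"
  shows "\<exists>\<sigma>. represents_binary G A b a L \<sigma> \<and> \<sigma> (1, 0) = w"
proof -
  have S_w: "prec_vec G A \<alpha> \<beta> s L w"
    and S_K: "\<And>K. K \<in> genus G L \<Longrightarrow> \<not> lattice_isometric G K L \<Longrightarrow> prec_lat G A \<alpha> \<beta> s K L"
    using assms(7) unfolding frakS_def by auto
  obtain K \<sigma> where K: "K \<in> genus G L" and \<sigma>: "represents_binary G A b a K \<sigma>"
    using assms(11) by blast
  have "\<exists>\<rho>. represents_binary G A b a L \<rho>"
  proof (cases "lattice_isometric G K L")
    case True
    then show ?thesis using represents_binary_isometric \<sigma> by blast
  next
    case False
    have "lattice_on G K" using K unfolding genus_def by blast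
    then show ?thesis
      using represents_binary_prec_lat[OF S_K[OF K False] _ assms(2) \<sigma> assms(8,9)] by blast
  qed
  then show ?thesis using represents_binary_prec_vec[OF S_w assms(2) _ assms(8,9)] by blast
qed

end
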